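(* Let $G$ be a locally compact, $\sigma$-compact topological group, regarded as a large scale group whose bornology consists of all pre-compact subsets of $G$. If $G$ is not compactly generated, then either $G$ has exactly one end or $G$ has infinitely many ends.
   Context: A large scale group is a group $G$ with a bornology $\mathcal B$ (a cover closed under subsets and finite unions) closed under inverses and products; uniformly bounded covers are those refining $\{gB\}_{g\in G}$ for some $B\in\mathcal B$; bounded sets are members of $\mathcal B$. Here $\mathcal B$ is the family of subsets of compact subsets of $G$. For $A\subseteq G$ and a cover $\mathcal U$, $st(A,\mathcal U)$ is the union of members of $\mathcal U$ meeting $A$; $A$ is coarsely clopen if $st(A,\mathcal U)\cap st(G\setminus A,\mathcal U)$ is bounded for every uniformly bounded $\mathcal U$. An end of $G$ is a family of unbounded coarsely clopen sets maximal with respect to all finite intersections being unbounded. *)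

theory Defs
  imports "HOL-Analysis.Analysis"
begin

text \<open>A topological group is modelled by a type of class topological_group_add
  (group written additively, not necessarily commutative).\<close>

definition ls_bounded :: "'a::topological_space set \<Rightarrow> bool" where
  "ls_bounded A \<longleftrightarrow> (\<exists>K. compact K \<and> A \<subseteq> K)"

definition ltrans :: "'a::plus \<Rightarrow> 'a set \<Rightarrow> 'a set" where
  "ltrans g B = (\<lambda>b. g + b) ` B"

definition unif_bounded_cover :: "'a::{topological_space,plus} set set \<Rightarrow> bool" where
  "unif_bounded_cover \<U> \<longleftrightarrow> \<Union>\<U> = UNIV \<and>
     (\<exists>B. ls_bounded B \<and> (\<forall>U\<in>\<U>. \<exists>g. U \<subseteq> ltrans g B))"

definition star :: "'a set \<Rightarrow> 'a set set \<Rightarrow> 'a set" where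
  "star A \<U> = \<Union>{U\<in>\<U>. U \<inter> A \<noteq> {}}"

definition coarsely_clopen :: "'a::{topological_space,plus} set \<Rightarrow> bool" where
  "coarsely_clopen A \<longleftrightarrow>
     (\<forall>\<U>. unif_bounded_cover \<U> \<longrightarrow> ls_bounded (star A \<U> \<inter> star (- A) \<U>))"

definition end_family :: "'a::{topological_space,plus} set set \<Rightarrow> bool" where
  "end_family E \<longleftrightarrow> (\<forall>A\<in>E. coarsely_clopen A \<and> \<not> ls_bounded A) \<and>
     (\<forall>F. F \<subseteq> E \<and> finite F \<and> F \<noteq> {} \<longrightarrow> \<not> ls_bounded (\<Inter>F))"

definition is_end :: "'a::{topological_space,plus} set set \<Rightarrow> bool" where
  "is_end E \<longleftrightarrow> end_family E \<and> (\<forall>E'. end_family E' \<and> E \<subseteq> E' \<longrightarrow> E' = E)"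

definition add_subgroup :: "'a::group_add set \<Rightarrow> bool" where
  "add_subgroup H \<longleftrightarrow> 0 \<in> H \<and> (\<forall>x\<in>H. \<forall>y\<in>H. x + y \<in> H) \<and> (\<forall>x\<in>H. - x \<in> H)"

definition generated_subgroup :: "'a::group_add set \<Rightarrow> 'a set" where
  "generated_subgroup S = \<Inter>{H. add_subgroup H \<and> S \<subseteq> H}"

definition compactly_generated :: "'a::topological_group_add itself \<Rightarrow> bool" where
  "compactly_generated _ \<longleftrightarrow> (\<exists>K::'a set. compact K \<and> generated_subgroup K = UNIV)"

definition sigma_compact :: "'a::topological_space itself \<Rightarrow> bool" where
  "sigma_compact _ \<longleftrightarrow> (\<exists>\<K>::'a set set. countable \<K> \<and> (\<forall>K\<in>\<K>. compact K) \<and> \<Union>\<K> = UNIV)"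

end

theory Submission
  imports Defs
begin

text \<open>If every compact set generates a bounded subgroup, then local compactness and
  \<open>\<sigma>\<close>-compactness give a strictly increasing chain of bounded open subgroups \<open>H\<^sub>n\<close> whose
  members are cofinal among bounded sets. Every union of shells \<open>H\<^sub>n\<^sub>+\<^sub>1 - H\<^sub>n\<close> is then
  coarsely clopen, and infinitely many disjoint infinite families of shells give infinitely
  many ends.

  Otherwise some compact \<open>L\<close> generates an unbounded subgroup. Two distinct ends yield a
  coarsely clopen \<open>A\<close> with \<open>A\<close> and \<open>-A\<close> unbounded; if there are only finitely many ends,
  translates of \<open>A\<close> are classified up to bounded error by the ends containing them, so the
  almost stabilizer of \<open>A\<close> has finite index. Enlarging \<open>L\<close> by coset representatives,
  membership in \<open>A\<close> is constant on cosets of \<open>\<langle>L\<rangle>\<close> away from the coarse boundary of \<open>A\<close>;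
  a coset of this kind inside \<open>A\<close> and one inside \<open>-A\<close>, differing by an element of the
  almost stabilizer, would force \<open>\<langle>L\<rangle>\<close> to be bounded.\<close>

lemma ls_bounded_subset: "ls_bounded B \<Longrightarrow> A \<subseteq> B \<Longrightarrow> ls_bounded A"
  unfolding ls_bounded_def by blast

lemma ls_bounded_Un: "ls_bounded A \<Longrightarrow> ls_bounded B \<Longrightarrow> ls_bounded (A \<union> B)"
  unfolding ls_bounded_def by (meson Un_mono compact_Un)

lemma ls_bounded_empty [simp]: "ls_bounded {}"
  unfolding ls_bounded_def by blast

lemma compact_imp_ls_bounded: "compact K \<Longrightarrow> ls_bounded K"
  unfolding ls_bounded_def by blast

lemma mem_ltrans: "x \<in> ltrans g B \<longleftrightarrow> - g + x \<in> (B :: 'a::group_add set)"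
  unfolding ltrans_def by (metis add_minus_cancel image_iff minus_add_cancel)

lemma ltrans_0 [simp]: "ltrans 0 (B :: 'a::group_add set) = B"
  unfolding ltrans_def by simp

lemma ltrans_ltrans: "ltrans g (ltrans h B) = ltrans (g + h) (B :: 'a::group_add set)"
  unfolding ltrans_def by (auto simp: image_image add.assoc)

lemma ltrans_Compl: "ltrans g (- B) = - ltrans g (B :: 'a::group_add set)"
  by (auto simp: mem_ltrans)

lemma ltrans_Int: "ltrans g (A \<inter> B) = ltrans g A \<inter> ltrans g (B :: 'a::group_add set)"
  by (auto simp: mem_ltrans)

lemma ltrans_sym_diff:
  "ltrans g (sym_diff A B) = sym_diff (ltrans g A) (ltrans g (B :: 'a::group_add set))"
  by (auto simp: mem_ltrans)

lemma ls_bounded_ltrans: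
  fixes B :: "'a::topological_group_add set"
  assumes "ls_bounded B"
  shows "ls_bounded (ltrans g B)"
proof -
  obtain K where "compact K" "B \<subseteq> K"
    using assms unfolding ls_bounded_def by blast
  moreover have "compact (ltrans g K)"
    using \<open>compact K\<close> unfolding ltrans_def by (intro compact_continuous_image continuous_intros)
  ultimately show ?thesis
    unfolding ls_bounded_def ltrans_def by blast
qed

lemma ls_bounded_ltrans_iff:
  fixes B :: "'a::topological_group_add set"
  shows "ls_bounded (ltrans g B) \<longleftrightarrow> ls_bounded B"
  by (metis ls_bounded_ltrans ltrans_0 ltrans_ltrans add.left_inverse)

lemma add_subgroup_add_mem: "add_subgroup H \<Longrightarrow> x \<in> H \<Longrightarrow> y \<in> H \<Longrightarrow> x + y \<in> H"
  unfolding add_subgroup_def by blast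

lemma add_subgroup_minus_mem: "add_subgroup H \<Longrightarrow> x \<in> H \<Longrightarrow> - x \<in> H"
  unfolding add_subgroup_def by blast

lemma add_subgroup_zero_mem: "add_subgroup H \<Longrightarrow> 0 \<in> H"
  unfolding add_subgroup_def by blast

lemma add_subgroup_generated_subgroup: "add_subgroup (generated_subgroup S)"
  unfolding generated_subgroup_def add_subgroup_def by blast

lemma generated_subgroup_superset: "S \<subseteq> generated_subgroup S"
  unfolding generated_subgroup_def by blast

lemma generated_subgroup_least: "add_subgroup H \<Longrightarrow> S \<subseteq> H \<Longrightarrow> generated_subgroup S \<subseteq> H"
  unfolding generated_subgroup_def by blast

lemma generated_subgroup_mono: "S \<subseteq> T \<Longrightarrow> generated_subgroup S \<subseteq> generated_subgroup T"
  by (meson add_subgroup_generated_subgroup generated_subgroup_least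
      generated_subgroup_superset order_trans)

lemma generated_subgroup_neq_UNIV:
  fixes K :: "'a::topological_group_add set"
  assumes "\<not> compactly_generated TYPE('a)" "compact K"
  shows "generated_subgroup K \<noteq> UNIV"
  using assms unfolding compactly_generated_def by blast

lemma not_ls_bounded_UNIV:
  assumes "\<not> compactly_generated TYPE('a::topological_group_add)"
  shows "\<not> ls_bounded (UNIV :: 'a set)"
  using generated_subgroup_neq_UNIV[OF assms] generated_subgroup_superset
  unfolding ls_bounded_def by (metis top.extremum_uniqueI)

lemma add_mem_nested_subgroup_iff:
  fixes M N :: "'a::group_add set"
  assumes M: "add_subgroup M" and N: "add_subgroup N" and "M \<subseteq> N \<or> N \<subseteq> M"
    and "x \<notin> M" "h \<in> M"
  shows "x + h \<in> N \<longleftrightarrow> x \<in> N"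
proof -
  have x_eq: "x = (x + h) + - h"
    by (simp add: add.assoc)
  show ?thesis
  proof (cases "M \<subseteq> N")
    case True
    then have "h \<in> N" "- h \<in> N"
      using \<open>h \<in> M\<close> N add_subgroup_minus_mem by blast+
    then show ?thesis
      using N x_eq add_subgroup_add_mem by metis
  next
    case False
    have "x + h \<notin> M"
      using M x_eq \<open>x \<notin> M\<close> \<open>h \<in> M\<close> add_subgroup_add_mem add_subgroup_minus_mem by metis
    then show ?thesis
      using False assms(3,4) by blast
  qed
qed

lemma mem_star_iff: "x \<in> star A \<U> \<longleftrightarrow> (\<exists>U\<in>\<U>. x \<in> U \<and> (\<exists>u\<in>U. u \<in> A))"
  unfolding star_def by blast

lemma coarsely_clopen_UNIV: "coarsely_clopen UNIV"
  unfolding coarsely_clopen_def star_def by simp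

lemma coarsely_clopen_Compl: "coarsely_clopen A \<Longrightarrow> coarsely_clopen (- A)"
  unfolding coarsely_clopen_def by (simp add: Int_commute)

lemma coarsely_clopen_Int:
  assumes "coarsely_clopen A" "coarsely_clopen B"
  shows "coarsely_clopen (A \<inter> B)"
  unfolding coarsely_clopen_def
proof (intro allI impI)
  fix \<U> :: "'a set set"
  assume "unif_bounded_cover \<U>"
  moreover have "star (A \<inter> B) \<U> \<inter> star (- (A \<inter> B)) \<U> \<subseteq>
      (star A \<U> \<inter> star (- A) \<U>) \<union> (star B \<U> \<inter> star (- B) \<U>)"
    unfolding star_def by blast
  ultimately show "ls_bounded (star (A \<inter> B) \<U> \<inter> star (- (A \<inter> B)) \<U>)"
    using assms unfolding coarsely_clopen_def by (meson ls_bounded_Un ls_bounded_subset)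
qed

lemma coarsely_clopen_Diff: "coarsely_clopen A \<Longrightarrow> coarsely_clopen B \<Longrightarrow> coarsely_clopen (A - B)"
  by (metis Diff_eq coarsely_clopen_Compl coarsely_clopen_Int)

lemma unif_bounded_cover_ltrans:
  fixes \<U> :: "'a::topological_group_add set set"
  assumes "unif_bounded_cover \<U>"
  shows "unif_bounded_cover (ltrans g ` \<U>)"
proof -
  obtain B where B: "ls_bounded B" "\<And>U. U \<in> \<U> \<Longrightarrow> \<exists>h. U \<subseteq> ltrans h B"
    and cover: "\<Union>\<U> = UNIV"
    using assms unfolding unif_bounded_cover_def by blast
  have "x \<in> \<Union>(ltrans g ` \<U>)" for x
  proof -
    have "- g + x \<in> \<Union>\<U>"
      using cover by simp
    then obtain U where "U \<in> \<U>" "x \<in> ltrans g U"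
      by (auto simp: mem_ltrans)
    then show ?thesis
      by blast
  qed
  then have "\<Union>(ltrans g ` \<U>) = UNIV"
    by blast
  moreover have "\<exists>h. ltrans g U \<subseteq> ltrans h B" if U: "U \<in> \<U>" for U
  proof -
    obtain h where "U \<subseteq> ltrans h B"
      using B(2)[OF U] by blast
    then have "ltrans g U \<subseteq> ltrans g (ltrans h B)"
      unfolding ltrans_def by (rule image_mono)
    then show ?thesis
      unfolding ltrans_ltrans by blast
  qed
  ultimately show ?thesis
    using B(1) unfolding unif_bounded_cover_def by blast
qed

lemma star_ltrans:
  fixes A :: "'a::group_add set"
  shows "star (ltrans g A) (ltrans g ` \<V>) = ltrans g (star A \<V>)"
proof -
  have "{W \<in> ltrans g ` \<V>. W \<inter> ltrans g A \<noteq> {}} = ltrans g ` {V \<in> \<V>. V \<inter> A \<noteq> {}}"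
    by (fastforce simp: ltrans_Int[symmetric] ltrans_def)
  then show ?thesis
    unfolding star_def by (simp add: ltrans_def image_Union)
qed

lemma coarsely_clopen_ltrans:
  fixes A :: "'a::topological_group_add set"
  assumes "coarsely_clopen A"
  shows "coarsely_clopen (ltrans g A)"
  unfolding coarsely_clopen_def
proof (intro allI impI)
  fix \<U> :: "'a set set"
  assume "unif_bounded_cover \<U>"
  define \<V> where "\<V> = ltrans (- g) ` \<U>"
  have "unif_bounded_cover \<V>"
    unfolding \<V>_def using \<open>unif_bounded_cover \<U>\<close> by (rule unif_bounded_cover_ltrans)
  then have "ls_bounded (ltrans g (star A \<V> \<inter> star (- A) \<V>))"
    using assms unfolding coarsely_clopen_def by (blast intro: ls_bounded_ltrans)
  moreover have "ltrans g ` \<V> = \<U>"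
    unfolding \<V>_def by (simp add: image_image ltrans_ltrans)
  then have "ltrans g (star A \<V> \<inter> star (- A) \<V>) = star (ltrans g A) \<U> \<inter> star (- ltrans g A) \<U>"
    by (simp only: ltrans_Int star_ltrans[symmetric] ltrans_Compl)
  ultimately show "ls_bounded (star (ltrans g A) \<U> \<inter> star (- ltrans g A) \<U>)"
    by simp
qed

lemma end_family_Union_chain:
  assumes C: "C \<in> chains {E. end_family E \<and> A \<in> E}" and "C \<noteq> {}"
  shows "end_family (\<Union>C)"
  unfolding end_family_def
proof (intro conjI allI impI ballI)
  fix X assume "X \<in> \<Union>C"
  then show "coarsely_clopen X" "\<not> ls_bounded X"
    using C unfolding chains_def end_family_def by blast+
next
  fix F assume F: "F \<subseteq> \<Union>C \<and> finite F \<and> F \<noteq> {}"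
  have "subset.chain {E. end_family E \<and> A \<in> E} C"
    using C by (simp add: chains_alt_def)
  then obtain E where "E \<in> C" "F \<subseteq> E"
    using finite_subset_Union_chain[of F C] F \<open>C \<noteq> {}\<close> by blast
  then show "\<not> ls_bounded (\<Inter>F)"
    using C F unfolding chains_def end_family_def by blast
qed

lemma exists_end_containing:
  assumes "coarsely_clopen A" "\<not> ls_bounded A"
  obtains E where "is_end E" "A \<in> E"
proof -
  let ?S = "{E. end_family E \<and> A \<in> E}"
  have "end_family {A}"
    unfolding end_family_def using assms by (auto simp: subset_singleton_iff)
  then have "\<exists>U\<in>?S. \<forall>X\<in>C. X \<subseteq> U" if C: "C \<in> chains ?S" for C
  proof (cases "C = {}")
    case False
    then have "A \<in> \<Union>C"
      using C unfolding chains_def by blast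
    with end_family_Union_chain[OF C False] show ?thesis
      by blast
  qed blast
  then obtain M where "M \<in> ?S" "\<forall>X\<in>?S. M \<subseteq> X \<longrightarrow> X = M"
    using Zorn_Lemma2[of ?S] by blast
  then show ?thesis
    using that unfolding is_end_def by blast
qed

lemma end_Inter_unbounded:
  "is_end E \<Longrightarrow> F \<subseteq> E \<Longrightarrow> finite F \<Longrightarrow> F \<noteq> {} \<Longrightarrow> \<not> ls_bounded (\<Inter>F)"
  unfolding is_end_def end_family_def by blast

lemma end_Int_unbounded:
  assumes "is_end E" "X \<in> E" "Y \<in> E"
  shows "\<not> ls_bounded (X \<inter> Y)"
  using end_Inter_unbounded[OF assms(1), of "{X, Y}"] assms(2,3) by simp

lemma end_absorbs:
  assumes E: "is_end E" and X: "coarsely_clopen X" "\<not> ls_bounded X"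
    and meets: "\<And>F. F \<subseteq> E \<Longrightarrow> finite F \<Longrightarrow> F \<noteq> {} \<Longrightarrow> \<not> ls_bounded (\<Inter>F \<inter> X)"
  shows "X \<in> E"
proof -
  have ef: "end_family E"
    using E unfolding is_end_def by blast
  have "\<not> ls_bounded (\<Inter>F)" if F: "F \<subseteq> insert X E" "finite F" "F \<noteq> {}" for F
  proof (cases "X \<in> F \<and> F - {X} \<noteq> {}")
    case True
    then have "\<Inter>F = \<Inter>(F - {X}) \<inter> X"
      by blast
    then show ?thesis
      using meets[of "F - {X}"] True F by auto
  next
    case False
    then have "F = {X} \<or> F \<subseteq> E"
      using F by blast
    then show ?thesis
      using ef X F unfolding end_family_def by auto
  qed
  then have "end_family (insert X E)"
    using ef X unfolding end_family_def by blast
  then show ?thesis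
    using E unfolding is_end_def by blast
qed

lemma exists_end_separating:
  assumes X: "coarsely_clopen X" and Y: "coarsely_clopen Y" and "\<not> ls_bounded (X - Y)"
  obtains E where "is_end E" "X \<in> E" "Y \<notin> E"
proof -
  obtain E where E: "is_end E" "X - Y \<in> E"
    using coarsely_clopen_Diff[OF X Y] assms(3) by (rule exists_end_containing)
  have "X \<in> E"
  proof (rule end_absorbs[OF E(1) X])
    show "\<not> ls_bounded X"
      using assms(3) by (meson Diff_subset ls_bounded_subset)
  next
    fix F assume "F \<subseteq> E" "finite F" "F \<noteq> {}"
    then have "\<not> ls_bounded (\<Inter>(insert (X - Y) F))"
      using E by (intro end_Inter_unbounded) auto
    moreover have "\<Inter>(insert (X - Y) F) \<subseteq> \<Inter>F \<inter> X"
      by blast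
    ultimately show "\<not> ls_bounded (\<Inter>F \<inter> X)"
      using ls_bounded_subset by blast
  qed
  moreover have "Y \<notin> E"
  proof
    assume "Y \<in> E"
    then have "\<not> ls_bounded ((X - Y) \<inter> Y)"
      using end_Int_unbounded[OF E] by blast
    moreover have "(X - Y) \<inter> Y = {}"
      by blast
    ultimately show False
      by simp
  qed
  ultimately show ?thesis
    using that E(1) by blast
qed

lemma ls_bounded_sym_diff_if_same_ends:
  assumes "coarsely_clopen X" "coarsely_clopen Y"
    and "{E. is_end E \<and> X \<in> E} = {E. is_end E \<and> Y \<in> E}"
  shows "ls_bounded (sym_diff X Y)"
proof -
  have "ls_bounded (U - W)"
    if U: "coarsely_clopen U" and W: "coarsely_clopen W"
      and same: "{E. is_end E \<and> U \<in> E} = {E. is_end E \<and> W \<in> E}"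
    for U W
  proof (rule ccontr)
    assume "\<not> ls_bounded (U - W)"
    with U W obtain E where "is_end E" "U \<in> E" "W \<notin> E"
      by (rule exists_end_separating)
    then show False
      using same by (auto simp: set_eq_iff)
  qed
  then show ?thesis
    using assms by (metis ls_bounded_Un)
qed

lemma exists_coarsely_clopen_two_sided:
  fixes E0 E1 :: "'a::{topological_space,plus} set set"
  assumes E0: "is_end E0" and E1: "is_end E1" and "E0 \<noteq> E1"
  obtains A :: "'a set" where "coarsely_clopen A" "\<not> ls_bounded A" "\<not> ls_bounded (- A)"
proof -
  obtain A where A: "A \<in> E0" "A \<notin> E1"
    using assms unfolding is_end_def by blast
  have cc: "coarsely_clopen A" and nb: "\<not> ls_bounded A"
    using E0 A(1) unfolding is_end_def end_family_def by blast+
  have "\<not> ls_bounded (- A)"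
  proof
    assume bounded: "ls_bounded (- A)"
    have "A \<in> E1"
    proof (rule end_absorbs[OF E1 cc nb])
      fix F assume "F \<subseteq> E1" "finite F" "F \<noteq> {}"
      then have "\<not> ls_bounded (\<Inter>F)"
        using E1 end_Inter_unbounded by blast
      moreover have "\<Inter>F \<subseteq> (\<Inter>F \<inter> A) \<union> - A"
        by blast
      ultimately show "\<not> ls_bounded (\<Inter>F \<inter> A)"
        using bounded ls_bounded_Un ls_bounded_subset by blast
    qed
    with A(2) show False ..
  qed
  with cc nb show ?thesis
    by (rule that)
qed

lemma exists_coarsely_clopen_two_sided_if_card_ends_neq_1:
  assumes "\<not> ls_bounded (UNIV :: 'a set)"
    and "card {E :: 'a set set. is_end E} \<noteq> 1"
  obtains A :: "'a::{topological_space,plus} set" where "coarsely_clopen A" "\<not> ls_bounded A" "\<not> ls_bounded (- A)"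
proof -
  obtain E0 :: "'a set set" where "is_end E0"
    using exists_end_containing[OF coarsely_clopen_UNIV assms(1)] by blast
  have "\<exists>E1. is_end E1 \<and> E0 \<noteq> E1"
  proof (rule ccontr)
    assume unique: "\<not> ?thesis"
    have "{E :: 'a set set. is_end E} = {E0}"
    proof (intro set_eqI iffI)
      fix E :: "'a set set"
      assume "E \<in> {E. is_end E}"
      then show "E \<in> {E0}"
        using unique by blast
    qed (simp add: \<open>is_end E0\<close>)
    with assms(2) show False
      by simp
  qed
  then obtain E1 where "is_end E1" "E0 \<noteq> E1"
    by blast
  with \<open>is_end E0\<close> show ?thesis
    using that by (rule exists_coarsely_clopen_two_sided)
qed

lemma infinite_ends_if_almost_disjoint:
  fixes A :: "nat \<Rightarrow> 'a::{topological_space,plus} set"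
  assumes "\<And>n. coarsely_clopen (A n)" "\<And>n. \<not> ls_bounded (A n)"
    and disjoint: "\<And>m n. m \<noteq> n \<Longrightarrow> ls_bounded (A m \<inter> A n)"
  shows "infinite {E :: 'a set set. is_end E}"
proof -
  have "\<forall>n. \<exists>E. is_end E \<and> A n \<in> E"
    using exists_end_containing[OF assms(1,2)] by metis
  then obtain e where e: "\<And>n. is_end (e n)" "\<And>n. A n \<in> e n"
    by metis
  have "inj e"
  proof (rule injI)
    fix m n assume "e m = e n"
    then have "\<not> ls_bounded (A m \<inter> A n)"
      using end_Int_unbounded e by metis
    then show "m = n"
      using disjoint by blast
  qed
  then have "infinite (range e)"
    by (rule range_inj_infinite)
  then show ?thesis
    by (rule infinite_super[rotated]) (use e in blast)
qed

definition almost_stabilizer :: "'a::topological_group_add set \<Rightarrow> 'a set" where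
  "almost_stabilizer A = {g. ls_bounded (sym_diff (ltrans g A) A)}"

definition finite_index :: "'a::group_add set \<Rightarrow> bool" where
  "finite_index H \<longleftrightarrow> (\<exists>R. finite R \<and> (\<forall>z. \<exists>h\<in>H. \<exists>r\<in>R. z = h + r))"

lemma add_subgroup_almost_stabilizer: "add_subgroup (almost_stabilizer A)"
  unfolding add_subgroup_def
proof (intro conjI ballI)
  show "0 \<in> almost_stabilizer A"
    by (simp add: almost_stabilizer_def)
next
  fix g h
  assume "g \<in> almost_stabilizer A" "h \<in> almost_stabilizer A"
  then have "ls_bounded (ltrans g (sym_diff (ltrans h A) A) \<union> sym_diff (ltrans g A) A)"
    unfolding almost_stabilizer_def by (simp add: ls_bounded_Un ls_bounded_ltrans)
  moreover have "sym_diff (ltrans (g + h) A) A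
      \<subseteq> ltrans g (sym_diff (ltrans h A) A) \<union> sym_diff (ltrans g A) A"
    unfolding ltrans_sym_diff ltrans_ltrans by blast
  ultimately show "g + h \<in> almost_stabilizer A"
    unfolding almost_stabilizer_def using ls_bounded_subset by blast
next
  fix g
  assume "g \<in> almost_stabilizer A"
  then have "ls_bounded (ltrans (- g) (sym_diff (ltrans g A) A))"
    unfolding almost_stabilizer_def by (simp add: ls_bounded_ltrans)
  moreover have "ltrans (- g) (sym_diff (ltrans g A) A) = sym_diff (ltrans (- g) A) A"
    unfolding ltrans_sym_diff ltrans_ltrans by auto
  ultimately show "- g \<in> almost_stabilizer A"
    unfolding almost_stabilizer_def by simp
qed

lemma almost_stabilizer_Compl: "almost_stabilizer (- A) = almost_stabilizer A"
proof -
  have "sym_diff (- X) (- Y) = sym_diff X Y" for X Y :: "'a set"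
    by blast
  then show ?thesis
    unfolding almost_stabilizer_def ltrans_Compl by simp
qed

text \<open>With finitely many ends, \<open>g\<close> ranges over finitely many classes according to the
  set of ends containing \<open>-g + A\<close>, and two elements of the same class lie in the same
  right coset of the almost stabilizer.\<close>
lemma finite_index_almost_stabilizer:
  fixes A :: "'a::topological_group_add set"
  assumes fin: "finite {E :: 'a set set. is_end E}" and cc: "coarsely_clopen A"
  shows "finite_index (almost_stabilizer A)"
proof -
  define ends_of where "ends_of g = {E. is_end E \<and> ltrans (- g) A \<in> E}" for g
  have "range ends_of \<subseteq> Pow {E. is_end E}"
    unfolding ends_of_def by blast
  then have "finite (range ends_of)"
    using fin by (meson finite_Pow_iff finite_subset)
  moreover define R where "R = (\<lambda>v. SOME g. ends_of g = v) ` range ends_of"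
  ultimately have "finite R"
    by simp
  moreover have "\<exists>h\<in>almost_stabilizer A. \<exists>r\<in>R. z = h + r" for z
  proof -
    define r where "r = (SOME g. ends_of g = ends_of z)"
    have "r \<in> R"
      unfolding R_def r_def by blast
    have "ends_of r = ends_of z"
      unfolding r_def by (rule someI) (rule refl)
    then have "ls_bounded (sym_diff (ltrans (- z) A) (ltrans (- r) A))"
      using cc by (intro ls_bounded_sym_diff_if_same_ends coarsely_clopen_ltrans)
        (simp_all add: ends_of_def)
    then have "ls_bounded (ltrans z (sym_diff (ltrans (- z) A) (ltrans (- r) A)))"
      by (rule ls_bounded_ltrans)
    moreover have "ltrans z (sym_diff (ltrans (- z) A) (ltrans (- r) A))
        = sym_diff (ltrans (z + - r) A) A"
      by (auto simp: ltrans_sym_diff ltrans_ltrans)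
    ultimately have "z + - r \<in> almost_stabilizer A"
      unfolding almost_stabilizer_def by simp
    moreover have "z = (z + - r) + r"
      by (simp add: add.assoc)
    ultimately show ?thesis
      using \<open>r \<in> R\<close> by blast
  qed
  ultimately show ?thesis
    unfolding finite_index_def by blast
qed

lemma coarsely_clopen_translation_boundary:
  fixes A L :: "'a::topological_group_add set"
  assumes cc: "coarsely_clopen A" and "compact L"
  obtains C where "compact C" "\<And>x l. l \<in> L \<Longrightarrow> (x \<in> A) \<noteq> (x + l \<in> A) \<Longrightarrow> x \<in> C"
proof -
  define \<U> where "\<U> = range (\<lambda>x. ltrans x (insert 0 L))"
  have self: "x \<in> ltrans x (insert 0 L)" for x
    by (simp add: mem_ltrans)
  have shift: "x + l \<in> ltrans x (insert 0 L)" if "l \<in> L" for x l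
    using that by (simp add: mem_ltrans add.assoc[symmetric])
  have "ls_bounded (insert 0 L)"
    using \<open>compact L\<close> by (simp add: compact_imp_ls_bounded)
  then have "unif_bounded_cover \<U>"
    unfolding unif_bounded_cover_def \<U>_def using self by blast
  then obtain C where C: "compact C" "star A \<U> \<inter> star (- A) \<U> \<subseteq> C"
    using cc unfolding coarsely_clopen_def ls_bounded_def by blast
  have "x \<in> C" if l: "l \<in> L" and changes: "(x \<in> A) \<noteq> (x + l \<in> A)" for x l
  proof -
    have "ltrans x (insert 0 L) \<in> \<U>"
      unfolding \<U>_def by blast
    moreover have "ltrans x (insert 0 L) \<inter> A \<noteq> {}" "ltrans x (insert 0 L) \<inter> - A \<noteq> {}"
      using self[of x] shift[OF l, of x] changes by blast+
    ultimately have "x \<in> star A \<U> \<inter> star (- A) \<U>"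
      unfolding star_def using self[of x] by blast
    then show ?thesis
      using C(2) by blast
  qed
  with C(1) show ?thesis
    by (rule that)
qed

lemma mem_iff_add_mem_generated_subgroup:
  fixes A :: "'a::group_add set"
  assumes step: "\<And>x l. P x \<Longrightarrow> l \<in> L \<Longrightarrow> x \<in> A \<longleftrightarrow> x + l \<in> A"
    and P_shift: "\<And>x h. P x \<Longrightarrow> h \<in> generated_subgroup L \<Longrightarrow> P (x + h)"
    and "P x" "h \<in> generated_subgroup L"
  shows "x \<in> A \<longleftrightarrow> x + h \<in> A"
proof -
  let ?H = "generated_subgroup L"
  define Q where "Q = {h \<in> ?H. \<forall>x. P x \<longrightarrow> (x \<in> A \<longleftrightarrow> x + h \<in> A)}"
  have H: "add_subgroup ?H"
    by (rule add_subgroup_generated_subgroup)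
  have "add_subgroup Q"
    unfolding add_subgroup_def
  proof (intro conjI ballI)
    show "0 \<in> Q"
      unfolding Q_def using add_subgroup_zero_mem[OF H] by simp
  next
    fix a b assume a: "a \<in> Q" and b: "b \<in> Q"
    have "x \<in> A \<longleftrightarrow> x + (a + b) \<in> A" if "P x" for x
    proof -
      have "x \<in> A \<longleftrightarrow> x + a \<in> A"
        using a that unfolding Q_def by blast
      also have "\<dots> \<longleftrightarrow> x + a + b \<in> A"
        using b P_shift[OF that] a unfolding Q_def by blast
      finally show ?thesis
        by (simp add: add.assoc)
    qed
    moreover have "a + b \<in> ?H"
      using a b add_subgroup_add_mem[OF H] unfolding Q_def by blast
    ultimately show "a + b \<in> Q"
      unfolding Q_def by blast
  next
    fix a assume a: "a \<in> Q"
    then have "- a \<in> ?H"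
      using add_subgroup_minus_mem[OF H] unfolding Q_def by blast
    moreover have "x \<in> A \<longleftrightarrow> x + - a \<in> A" if "P x" for x
    proof -
      have "x + - a \<in> A \<longleftrightarrow> x + - a + a \<in> A"
        using a P_shift[OF that \<open>- a \<in> ?H\<close>] unfolding Q_def by blast
      then show ?thesis
        by (simp add: add.assoc)
    qed
    ultimately show "- a \<in> Q"
      unfolding Q_def by blast
  qed
  moreover have "L \<subseteq> Q"
    unfolding Q_def using step generated_subgroup_superset by blast
  ultimately have "?H \<subseteq> Q"
    by (rule generated_subgroup_least)
  then show ?thesis
    using assms(3,4) unfolding Q_def by blast
qed

lemma almost_stabilizer_subset_subgroup:
  fixes A M :: "'a::topological_group_add set"
  assumes M: "add_subgroup M" and "A \<subseteq> M" "\<not> ls_bounded A"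
  shows "almost_stabilizer A \<subseteq> M"
proof
  fix g assume g: "g \<in> almost_stabilizer A"
  show "g \<in> M"
  proof (rule ccontr)
    assume "g \<notin> M"
    have "x \<notin> ltrans g A" if "x \<in> A" for x
    proof
      assume "x \<in> ltrans g A"
      then have "- g + x \<in> M" "x \<in> M"
        using that \<open>A \<subseteq> M\<close> by (auto simp: mem_ltrans)
      then have "x + - (- g + x) \<in> M"
        using M add_subgroup_add_mem add_subgroup_minus_mem by blast
      then show False
        using \<open>g \<notin> M\<close> by (simp add: minus_add add.assoc)
    qed
    then have "A \<subseteq> sym_diff (ltrans g A) A"
      by blast
    then show False
      using g assms(3) ls_bounded_subset unfolding almost_stabilizer_def by blast
  qed
qed

lemma ls_bounded_if_translates_separated:
  fixes A H :: "'a::topological_group_add set"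
  assumes "y + - x \<in> almost_stabilizer A"
    and "\<And>h. h \<in> H \<Longrightarrow> x + h \<in> A" "\<And>h. h \<in> H \<Longrightarrow> y + h \<notin> A"
  shows "ls_bounded H"
proof -
  have "ltrans y H \<subseteq> sym_diff (ltrans (y + - x) A) A"
  proof
    fix z assume "z \<in> ltrans y H"
    then obtain h where h: "h \<in> H" "z = y + h"
      unfolding ltrans_def by blast
    then have "z = (y + - x) + (x + h)"
      by (simp only: add.assoc minus_add_cancel)
    then have "z \<in> ltrans (y + - x) A"
      using assms(2)[OF h(1)] unfolding ltrans_def by blast
    then show "z \<in> sym_diff (ltrans (y + - x) A) A"
      using assms(3)[OF h(1)] h(2) by blast
  qed
  then have "ls_bounded (ltrans y H)"
    using assms(1) ls_bounded_subset unfolding almost_stabilizer_def by blast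
  then show ?thesis
    by (simp add: ls_bounded_ltrans_iff)
qed

text \<open>The representatives of the cosets of the almost stabilizer lie in \<open>H\<close>, so \<open>x\<close> can be
  moved inside \<open>x + H\<close> to a point differing from \<open>y\<close> by an element of the almost stabilizer.\<close>
lemma ls_bounded_if_cosets_separated:
  fixes A H R :: "'a::topological_group_add set"
  assumes H: "add_subgroup H" "R \<subseteq> H"
    and cosets: "\<And>z. \<exists>n\<in>almost_stabilizer A. \<exists>r\<in>R. z = n + r"
    and x: "\<And>h. h \<in> H \<Longrightarrow> x + h \<in> A" and y: "\<And>h. h \<in> H \<Longrightarrow> y + h \<notin> A"
  shows "ls_bounded H"
proof -
  obtain n r where n: "n \<in> almost_stabilizer A" "r \<in> R" "x = n + r"
    using cosets by blast
  obtain n' r' where n': "n' \<in> almost_stabilizer A" "r' \<in> R" "y = n' + r'"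
    using cosets by blast
  define x' where "x' = x + (- r + r')"
  have "- r + r' \<in> H"
    using n(2) n'(2) H add_subgroup_add_mem add_subgroup_minus_mem by blast
  then have "x' + h \<in> A" if "h \<in> H" for h
    using x[of "- r + r' + h"] that H(1) add_subgroup_add_mem unfolding x'_def by (metis add.assoc)
  moreover have "y + - x' = n' + - n"
    unfolding x'_def n(3) n'(3) by (simp add: minus_add add.assoc del: add_uminus_conv_diff)
  then have "y + - x' \<in> almost_stabilizer A"
    using n(1) n'(1) add_subgroup_almost_stabilizer add_subgroup_add_mem add_subgroup_minus_mem
    by metis
  ultimately show ?thesis
    using ls_bounded_if_translates_separated y by blast
qed

lemma coarsely_clopen_invariant_on_far_cosets:
  fixes A L :: "'a::topological_group_add set"
  assumes cc: "coarsely_clopen A" and "compact L"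
  obtains C where "compact C"
    "\<And>x h. \<forall>h'\<in>generated_subgroup L. x + h' \<notin> C \<Longrightarrow> h \<in> generated_subgroup L
      \<Longrightarrow> x \<in> A \<longleftrightarrow> x + h \<in> A"
proof -
  let ?H = "generated_subgroup L"
  have H: "add_subgroup ?H"
    by (rule add_subgroup_generated_subgroup)
  obtain C where "compact C" and boundary: "\<And>x l. l \<in> L \<Longrightarrow> (x \<in> A) \<noteq> (x + l \<in> A) \<Longrightarrow> x \<in> C"
    using coarsely_clopen_translation_boundary[OF cc \<open>compact L\<close>] by blast
  have "x \<in> A \<longleftrightarrow> x + h \<in> A" if "\<forall>h'\<in>?H. x + h' \<notin> C" "h \<in> ?H" for x h
  proof (rule mem_iff_add_mem_generated_subgroup[where P = "\<lambda>x. \<forall>h'\<in>?H. x + h' \<notin> C"])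
    fix x l
    assume far: "\<forall>h'\<in>?H. x + h' \<notin> C" and "l \<in> L"
    then have "x \<notin> C"
      using add_subgroup_zero_mem[OF H] by (metis add_0_right)
    then show "x \<in> A \<longleftrightarrow> x + l \<in> A"
      using boundary[OF \<open>l \<in> L\<close>] by blast
  next
    fix x h
    assume "\<forall>h'\<in>?H. x + h' \<notin> C" "h \<in> ?H"
    then show "\<forall>h'\<in>?H. x + h + h' \<notin> C"
      using add_subgroup_add_mem[OF H] by (metis add.assoc)
  qed (use that in blast)+
  with \<open>compact C\<close> show ?thesis
    by (rule that)
qed

lemma not_subset_generated_subgroup_if_finite_index:
  fixes X K R :: "'a::topological_group_add set"
  assumes "\<not> compactly_generated TYPE('a)" "compact K" "R \<subseteq> generated_subgroup K"
    and "\<And>z. \<exists>n\<in>almost_stabilizer X. \<exists>r\<in>R. z = n + r" and "\<not> ls_bounded X"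
  shows "\<not> X \<subseteq> generated_subgroup K"
proof
  let ?M = "generated_subgroup K"
  assume "X \<subseteq> ?M"
  then have "almost_stabilizer X \<subseteq> ?M"
    using almost_stabilizer_subset_subgroup[OF add_subgroup_generated_subgroup _ assms(5)] by blast
  then have "z \<in> ?M" for z
    using assms(3) assms(4)[of z] add_subgroup_add_mem[OF add_subgroup_generated_subgroup] by blast
  then show False
    using generated_subgroup_neq_UNIV[OF assms(1,2)] by blast
qed

text \<open>Cosets of \<open>H\<close> meeting \<open>C\<close> lie in a compactly generated, hence proper, subgroup, so
  both \<open>A\<close> and \<open>-A\<close> contain cosets of \<open>H\<close> avoiding \<open>C\<close>.\<close>
lemma ls_bounded_side_if_finite_index_almost_stabilizer:
  fixes A L :: "'a::topological_group_add set"
  assumes ncg: "\<not> compactly_generated TYPE('a)"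
    and L: "compact L" "\<not> ls_bounded (generated_subgroup L)"
    and cc: "coarsely_clopen A" and "finite_index (almost_stabilizer A)"
  shows "ls_bounded A \<or> ls_bounded (- A)"
proof (rule ccontr)
  assume "\<not> ?thesis"
  then have unbounded: "\<not> ls_bounded A" "\<not> ls_bounded (- A)"
    by auto
  obtain R where "finite R" and cosets: "\<And>z. \<exists>n\<in>almost_stabilizer A. \<exists>r\<in>R. z = n + r"
    using assms(5) unfolding finite_index_def by blast
  define H where "H = generated_subgroup (L \<union> R)"
  have H: "add_subgroup H" "R \<subseteq> H"
    unfolding H_def using add_subgroup_generated_subgroup generated_subgroup_superset by blast+
  have "\<not> ls_bounded H"
    using L(2) generated_subgroup_mono[of L "L \<union> R"] ls_bounded_subset unfolding H_def by blast
  have "compact (L \<union> R)"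
    using L(1) \<open>finite R\<close> by (simp add: compact_Un finite_imp_compact)
  then obtain C where "compact C"
    and invariant: "\<And>x h. \<forall>h'\<in>H. x + h' \<notin> C \<Longrightarrow> h \<in> H \<Longrightarrow> x \<in> A \<longleftrightarrow> x + h \<in> A"
    unfolding H_def using coarsely_clopen_invariant_on_far_cosets[OF cc] by blast
  define far where "far x \<longleftrightarrow> (\<forall>h\<in>H. x + h \<notin> C)" for x
  define M where "M = generated_subgroup (L \<union> R \<union> C)"
  have M: "add_subgroup M" "H \<subseteq> M" "C \<subseteq> M"
    unfolding H_def M_def
    using add_subgroup_generated_subgroup generated_subgroup_mono generated_subgroup_superset by blast+
  have "x \<in> M" if "\<not> far x" for x
  proof -
    obtain h where "h \<in> H" "x + h \<in> C"
      using \<open>\<not> far x\<close> unfolding far_def by blast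
    then have "x + h + - h \<in> M"
      using M add_subgroup_add_mem add_subgroup_minus_mem by blast
    then show ?thesis
      by (simp add: add.assoc)
  qed
  moreover have "\<not> X \<subseteq> M"
    if "\<not> ls_bounded X" "almost_stabilizer X = almost_stabilizer A" for X
  proof -
    have "compact (L \<union> R \<union> C)"
      using \<open>compact (L \<union> R)\<close> \<open>compact C\<close> by (rule compact_Un)
    moreover have "R \<subseteq> M"
      using H(2) M(2) by blast
    ultimately show ?thesis
      unfolding M_def using not_subset_generated_subgroup_if_finite_index[OF ncg] cosets that
      by metis
  qed
  then have "\<not> A \<subseteq> M" "\<not> - A \<subseteq> M"
    using unbounded almost_stabilizer_Compl by blast+
  ultimately obtain x y where "x \<in> A" "far x" "y \<notin> A" "far y"
    by blast
  then have "ls_bounded H"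
    using ls_bounded_if_cosets_separated[OF H cosets] invariant unfolding far_def by blast
  with \<open>\<not> ls_bounded H\<close> show False ..
qed

lemma locally_compact_neighbourhood:
  fixes x :: "'a::topological_space"
  assumes "locally_compact_space (euclidean :: 'a topology)"
  obtains V K :: "'a set" where "open V" "x \<in> V" "V \<subseteq> K" "compact K"
proof -
  have "\<exists>V K. openin euclidean V \<and> compactin euclidean K \<and> x \<in> V \<and> V \<subseteq> K"
    using assms unfolding locally_compact_space_def topspace_euclidean by blast
  then obtain V K where "openin euclidean V" "compactin euclidean K" "x \<in> V" "V \<subseteq> K"
    by blast
  moreover from this have "open V" "compact K"
    by (simp_all only: open_openin compactin_euclidean_iff)
  ultimately show ?thesis
    by (intro that)
qed

lemma sigma_compact_sequence:
  assumes "sigma_compact TYPE('a)"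
  obtains k :: "nat \<Rightarrow> 'a::topological_space set" where "\<And>n. compact (k n)" "\<And>x. \<exists>n. x \<in> k n"
proof -
  obtain \<K> :: "'a set set" where \<K>: "countable \<K>" "\<And>K. K \<in> \<K> \<Longrightarrow> compact K" "\<Union>\<K> = UNIV"
    using assms unfolding sigma_compact_def by auto
  have "\<K> \<noteq> {}"
    using \<K>(3) by auto
  have "compact (from_nat_into \<K> n)" for n
    by (rule \<K>(2)[OF from_nat_into[OF \<open>\<K> \<noteq> {}\<close>]])
  moreover have "\<exists>n. x \<in> from_nat_into \<K> n" for x
  proof -
    have "x \<in> \<Union>(range (from_nat_into \<K>))"
      using range_from_nat_into[OF \<open>\<K> \<noteq> {}\<close> \<K>(1)] \<K>(3) by simp
    then show ?thesis
      by blast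
  qed
  ultimately show ?thesis
    by (rule that)
qed

lemma open_ltrans:
  fixes V :: "'a::topological_group_add set"
  assumes "open V"
  shows "open (ltrans h V)"
proof -
  have "ltrans h V = (\<lambda>x. - h + x) -` V"
    by (auto simp: mem_ltrans)
  moreover have "continuous_on UNIV (\<lambda>x::'a. - h + x)"
    by (intro continuous_intros)
  ultimately show ?thesis
    using assms by (simp add: open_vimage)
qed

lemma open_add_subgroup:
  fixes H :: "'a::topological_group_add set"
  assumes H: "add_subgroup H" and V: "open V" "0 \<in> V" "V \<subseteq> H"
  shows "open H"
proof -
  have "h \<in> ltrans h V" for h
    using V(2) by (simp add: mem_ltrans)
  moreover have "ltrans h V \<subseteq> H" if "h \<in> H" for h
    using that V(3) H add_subgroup_add_mem unfolding ltrans_def by blast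
  ultimately have "H = (\<Union>h\<in>H. ltrans h V)"
    by blast
  then show ?thesis
    using open_ltrans[OF V(1)] by (metis open_UN)
qed

lemma compact_subset_open_chain:
  fixes H :: "nat \<Rightarrow> 'a::topological_space set"
  assumes "\<And>n. open (H n)" "mono H" "\<And>x. \<exists>n. x \<in> H n" "compact K"
  shows "\<exists>m. K \<subseteq> H m"
proof -
  have "K \<subseteq> (\<Union>n\<in>UNIV. H n)"
    using assms(3) by blast
  then obtain F where "finite F" "K \<subseteq> (\<Union>n\<in>F. H n)"
    by (rule compactE_image[OF assms(4) assms(1)])
  moreover have "H n \<subseteq> H (Max (insert 0 F))" if "n \<in> F" for n
    using \<open>finite F\<close> that by (intro monoD[OF assms(2)]) simp
  ultimately show ?thesis
    by blast
qed

lemma ls_bounded_iff_subset_open_chain: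
  fixes H :: "nat \<Rightarrow> 'a::topological_space set"
  assumes "\<And>n. open (H n)" "mono H" "\<And>x. \<exists>n. x \<in> H n" "\<And>n. ls_bounded (H n)"
  shows "ls_bounded B \<longleftrightarrow> (\<exists>m. B \<subseteq> H m)"
proof
  assume "ls_bounded B"
  then obtain K where "compact K" "B \<subseteq> K"
    unfolding ls_bounded_def by blast
  then show "\<exists>m. B \<subseteq> H m"
    using compact_subset_open_chain[OF assms(1-3)] by blast
next
  assume "\<exists>m. B \<subseteq> H m"
  then show "ls_bounded B"
    using assms(4) ls_bounded_subset by blast
qed

lemma ls_bounded_proper_compact_superset:
  fixes X :: "'a::topological_space set"
  assumes "\<not> ls_bounded (UNIV :: 'a set)" "ls_bounded X"
  shows "\<exists>K. compact K \<and> X \<subset> K"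
proof -
  obtain K where K: "compact K" "X \<subseteq> K"
    using assms(2) unfolding ls_bounded_def by blast
  have "K \<noteq> UNIV"
  proof
    assume "K = UNIV"
    then have "ls_bounded (UNIV :: 'a set)"
      using K(1) by (simp add: compact_imp_ls_bounded)
    with assms(1) show False ..
  qed
  then obtain p where "p \<notin> K"
    by auto
  then have "compact (insert p K)" "X \<subset> insert p K"
    using K by auto
  then show ?thesis
    by blast
qed

text \<open>If compact sets generate bounded subgroups, enlarge step by step a compact
  identity neighbourhood by the \<open>n\<close>-th member of a compact exhaustion and by a compact proper
  superset of the previous subgroup.\<close>
lemma exhausting_chain_of_bounded_subgroups:
  assumes lc: "locally_compact_space (euclidean :: 'a topology)"
    and sig: "sigma_compact TYPE('a)" and ncg: "\<not> compactly_generated TYPE('a)"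
    and bnd: "\<And>B :: 'a set. compact B \<Longrightarrow> ls_bounded (generated_subgroup B)"
  obtains H :: "nat \<Rightarrow> 'a::topological_group_add set"
  where "\<And>n. add_subgroup (H n)" "mono H" "\<And>B. ls_bounded B \<longleftrightarrow> (\<exists>m. B \<subseteq> H m)"
    "\<And>n. H (Suc n) - H n \<noteq> {}"
proof -
  obtain V K0 :: "'a set" where V: "open V" "0 \<in> V" "V \<subseteq> K0" "compact K0"
    using locally_compact_neighbourhood[OF lc] by blast
  obtain k :: "nat \<Rightarrow> 'a set" where k: "\<And>n. compact (k n)" "\<And>x. \<exists>n. x \<in> k n"
    using sigma_compact_sequence[OF sig] by blast
  define E where "E X = (SOME K. compact K \<and> X \<subset> K)" for X :: "'a set"
  have E: "compact (E X)" "X \<subset> E X" if "ls_bounded X" for X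
    using someI_ex[OF ls_bounded_proper_compact_superset[OF not_ls_bounded_UNIV[OF ncg] that]]
    unfolding E_def by blast+
  define H where "H = rec_nat (generated_subgroup K0) (\<lambda>n X. generated_subgroup (K0 \<union> k n \<union> E X))"
  have H_0: "H 0 = generated_subgroup K0"
    and H_Suc: "H (Suc n) = generated_subgroup (K0 \<union> k n \<union> E (H n))" for n
    by (simp_all add: H_def)
  have bounded: "ls_bounded (H n)" for n
  proof (induction n)
    case 0
    show ?case
      unfolding H_0 using V(4) by (rule bnd)
  next
    case (Suc n)
    show ?case
      unfolding H_Suc using V(4) k(1) E(1)[OF Suc] by (intro bnd compact_Un)
  qed
  have subgroup: "add_subgroup (H n)" for n
    by (cases n) (simp_all only: H_0 H_Suc add_subgroup_generated_subgroup)
  have generators: "K0 \<union> k n \<union> E (H n) \<subseteq> H (Suc n)" for n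
    unfolding H_Suc by (rule generated_subgroup_superset)
  then have E_H: "E (H n) \<subseteq> H (Suc n)" and k_H: "k n \<subseteq> H (Suc n)" for n
    by blast+
  have "H n \<subseteq> H (Suc n)" for n
    using E(2)[OF bounded, of n] E_H[of n] by (meson order_trans psubset_imp_subset)
  then have "mono H"
    unfolding mono_iff_le_Suc by auto
  moreover have "ls_bounded B \<longleftrightarrow> (\<exists>m. B \<subseteq> H m)" for B
  proof (rule ls_bounded_iff_subset_open_chain[OF _ \<open>mono H\<close> _ bounded])
    have "K0 \<subseteq> H n" for n
      using generators by (cases n) (auto simp: H_0 generated_subgroup_superset)
    then have "V \<subseteq> H n" for n
      using V(3) by blast
    then show "open (H n)" for n
      by (rule open_add_subgroup[OF subgroup V(1,2)])
    show "\<exists>n. x \<in> H n" for x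
      using k(2) k_H by blast
  qed
  moreover have "H (Suc n) - H n \<noteq> {}" for n
  proof -
    obtain p where "p \<in> E (H n) - H n"
      using psubset_imp_ex_mem[OF E(2)[OF bounded]] by blast
    then show ?thesis
      using E_H by blast
  qed
  ultimately show ?thesis
    by (rule that[OF subgroup])
qed

lemma coarsely_clopen_union_of_shells:
  fixes H :: "nat \<Rightarrow> 'a::topological_group_add set"
  assumes subgroup: "\<And>n. add_subgroup (H n)" and "mono H"
    and bounded_iff: "\<And>B. ls_bounded B \<longleftrightarrow> (\<exists>m. B \<subseteq> H m)"
  shows "coarsely_clopen {x. \<exists>n\<in>N. x \<in> H (Suc n) - H n}"
proof -
  define A where "A = {x. \<exists>n\<in>N. x \<in> H (Suc n) - H n}"
  have nested: "H m \<subseteq> H n \<or> H n \<subseteq> H m" for m n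
    using \<open>mono H\<close> unfolding mono_def by (metis nle_le)
  have same_shell: "u \<in> A \<longleftrightarrow> x \<in> A"
    if x: "x \<in> ltrans g B" "x \<notin> H m" and u: "u \<in> ltrans g B" and B: "B \<subseteq> H m" for x u g B m
  proof -
    define h where "h = - (- g + x) + (- g + u)"
    have "- g + x \<in> H m" "- g + u \<in> H m"
      using x(1) u B by (auto simp: mem_ltrans)
    then have "h \<in> H m"
      unfolding h_def using subgroup[of m] add_subgroup_add_mem add_subgroup_minus_mem by blast
    moreover have "x + h = u"
      unfolding h_def by (simp add: minus_add add.assoc del: add_uminus_conv_diff)
    ultimately have "u \<in> H n \<longleftrightarrow> x \<in> H n" for n
      using add_mem_nested_subgroup_iff[OF subgroup subgroup nested x(2)] by blast
    then show ?thesis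
      unfolding A_def by simp
  qed
  have "ls_bounded (star A \<U> \<inter> star (- A) \<U>)" if cover: "unif_bounded_cover \<U>" for \<U>
  proof -
    obtain B where "ls_bounded B" and translates: "\<And>U. U \<in> \<U> \<Longrightarrow> \<exists>g. U \<subseteq> ltrans g B"
      using cover unfolding unif_bounded_cover_def by blast
    then obtain m where "B \<subseteq> H m"
      unfolding bounded_iff by blast
    have "star A \<U> \<inter> star (- A) \<U> \<subseteq> H m"
    proof
      fix x assume x: "x \<in> star A \<U> \<inter> star (- A) \<U>"
      then obtain U u where "U \<in> \<U>" "x \<in> U" "u \<in> U" "u \<in> A"
        by (auto simp: mem_star_iff)
      moreover obtain W w where "W \<in> \<U>" "x \<in> W" "w \<in> W" "w \<notin> A"
        using x by (auto simp: mem_star_iff)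
      moreover obtain g where "U \<subseteq> ltrans g B"
        using translates[OF \<open>U \<in> \<U>\<close>] by blast
      moreover obtain g' where "W \<subseteq> ltrans g' B"
        using translates[OF \<open>W \<in> \<U>\<close>] by blast
      ultimately show "x \<in> H m"
        using same_shell[of x g B m u] same_shell[of x g' B m w] \<open>B \<subseteq> H m\<close> by blast
    qed
    then show ?thesis
      unfolding bounded_iff by blast
  qed
  then show ?thesis
    unfolding coarsely_clopen_def A_def[symmetric] by blast
qed

text \<open>The shells are split into infinitely many infinite families via \<open>prod_decode\<close>.\<close>
lemma infinite_ends_if_exhausting_chain:
  fixes H :: "nat \<Rightarrow> 'a::topological_group_add set"
  assumes subgroup: "\<And>n. add_subgroup (H n)" and "mono H"
    and bounded_iff: "\<And>B. ls_bounded B \<longleftrightarrow> (\<exists>m. B \<subseteq> H m)"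
    and grows: "\<And>n. H (Suc n) - H n \<noteq> {}"
  shows "infinite {E :: 'a set set. is_end E}"
proof -
  define A where "A q = {x. \<exists>n\<in>{n. fst (prod_decode n) = q}. x \<in> H (Suc n) - H n}" for q
  have chain: "H m \<subseteq> H n" if "m \<le> n" for m n
    using \<open>mono H\<close> that by (rule monoD)
  have shell_unique: "n = n'" if "x \<in> H (Suc n) - H n" "x \<in> H (Suc n') - H n'" for x n n'
  proof (rule ccontr)
    assume "n \<noteq> n'"
    then have "Suc n \<le> n' \<or> Suc n' \<le> n"
      by arith
    then show False
      using that chain by blast
  qed
  have "coarsely_clopen (A q)" for q
    unfolding A_def using subgroup \<open>mono H\<close> bounded_iff by (rule coarsely_clopen_union_of_shells)
  moreover have "\<not> ls_bounded (A q)" for q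
  proof
    assume "ls_bounded (A q)"
    then obtain m where m: "A q \<subseteq> H m"
      by (auto simp: bounded_iff)
    define n where "n = prod_encode (q, m)"
    obtain x where x: "x \<in> H (Suc n) - H n"
      using grows by blast
    moreover have "fst (prod_decode n) = q"
      by (simp add: n_def)
    ultimately have "x \<in> A q"
      unfolding A_def by blast
    moreover have "H m \<subseteq> H n"
      unfolding n_def by (intro chain le_prod_encode_2)
    ultimately show False
      using m x by blast
  qed
  moreover have "ls_bounded (A q \<inter> A q')" if "q \<noteq> q'" for q q'
  proof -
    have "A q \<inter> A q' = {}"
      unfolding A_def using shell_unique that by blast
    then show ?thesis
      by simp
  qed
  ultimately show ?thesis
    by (rule infinite_ends_if_almost_disjoint)
qed

lemma infinite_ends_if_compact_subgroups_bounded: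
  assumes "locally_compact_space (euclidean :: 'a::topological_group_add topology)"
    and "sigma_compact TYPE('a)" and "\<not> compactly_generated TYPE('a)"
    and "\<And>B :: 'a set. compact B \<Longrightarrow> ls_bounded (generated_subgroup B)"
  shows "infinite {E :: 'a set set. is_end E}"
proof (rule exhausting_chain_of_bounded_subgroups[OF assms])
  fix H :: "nat \<Rightarrow> 'a set"
  assume "\<And>n. add_subgroup (H n)" "mono H" "\<And>B. ls_bounded B \<longleftrightarrow> (\<exists>m. B \<subseteq> H m)"
    "\<And>n. H (Suc n) - H n \<noteq> {}"
  then show ?thesis
    by (rule infinite_ends_if_exhausting_chain)
qed

theorem corollary9p14:
  assumes "locally_compact_space (euclidean :: 'a::topological_group_add topology)"
    and "sigma_compact TYPE('a)"
    and "\<not> compactly_generated TYPE('a)"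
  shows "card {E :: 'a set set. is_end E} = 1 \<or> infinite {E :: 'a set set. is_end E}"
proof (cases "\<forall>B :: 'a set. compact B \<longrightarrow> ls_bounded (generated_subgroup B)")
  case True
  then have "infinite {E :: 'a set set. is_end E}"
    using infinite_ends_if_compact_subgroups_bounded[OF assms] by blast
  then show ?thesis ..
next
  case False
  then obtain L :: "'a set" where L: "compact L" "\<not> ls_bounded (generated_subgroup L)"
    by blast
  show ?thesis
  proof (rule ccontr)
    assume "\<not> ?thesis"
    then have "finite {E :: 'a set set. is_end E}" "card {E :: 'a set set. is_end E} \<noteq> 1"
      by auto
    moreover obtain A :: "'a set" where A: "coarsely_clopen A" "\<not> ls_bounded A" "\<not> ls_bounded (- A)"
      using exists_coarsely_clopen_two_sided_if_card_ends_neq_1[OF not_ls_bounded_UNIV[OF assms(3)]]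
        calculation(2) by blast
    ultimately have "finite_index (almost_stabilizer A)"
      using finite_index_almost_stabilizer by blast
    with ls_bounded_side_if_finite_index_almost_stabilizer[OF assms(3) L A(1)] A(2,3) show False
      by blast
  qed
qed

end
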